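(* Let $n\ge 1$ and $m\ge 2$ be integers with $m\nmid n$, let $t$ be an integer with $m\mid t$, let $k,s$ be nonnegative integers, and let $f=\sum_{i=0}^{k}a_i\theta_{m,i}$ and $g=\theta_{m,0}+\sum_{j=1}^{s}b_j\theta_{m,j}$ with $a_i,b_j\in\mathbb{F}_2$. Then $$(S^t\circ f)\odot\bigodot_{v\in\{1,2,\dots,m-1\}}\left(S^{t-v}\circ g+\mathbf{1}\right)=S^{t-m}\circ\left(\sum_{i=0}^{k}a_i\theta_{m,i+1}\right).$$
   Context: For $x=(x_0,\dots,x_{n-1})\in\mathbb{F}_2^n$, indices are taken modulo $n$. $S$ is the cyclic left shift $S(x_0,\dots,x_{n-1})=(x_1,\dots,x_{n-1},x_0)$; $S^i$ denotes its $i$-th power for any integer $i$ (so $S^n$ is the identity and negative powers are powers of the inverse). Maps $\mathbb{F}_2^n\to\mathbb{F}_2^n$ are added pointwise, composed by $\circ$, and multiplied by the Hadamard product $(f\odot g)(x)=(f_0(x)g_0(x),\dots,f_{n-1}(x)g_{n-1}(x))$ where $f_i,g_i$ are coordinate functions; $\bigodot$ denotes an iterated Hadamard product. $\mathbf{1}$ denotes the constant map with value $(1,\dots,1)$. For a nonnegative integer $k$, $\theta_{m,k}\colon\mathbb{F}_2^n\to\mathbb{F}_2^n$ is defined by $\theta_{m,k}(x)=y$ with $y_i=x_{i+mk}\prod_{1\le j\le mk-1,\ m\nmid j}(x_{i+j}+1)$; equivalently $\theta_{m,k}=S^{mk}\odot\bigodot_{1\le j\le mk-1,\,m\nmid j}(S^j+\mathbf{1})$,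 and $\theta_{m,0}$ is the identity map. *)

theory Defs
  imports Main "HOL-Library.Z2"
begin

text \<open>Vectors of F_2^n are modelled as functions nat => bit (bit = the field F_2),
  of which only the coordinates 0..n-1 are meaningful; indices are reduced mod n.\<close>

definition shiftv :: "nat \<Rightarrow> int \<Rightarrow> (nat \<Rightarrow> bit) \<Rightarrow> (nat \<Rightarrow> bit)" where
  "shiftv n i x = (\<lambda>j. x (nat ((int j + i) mod int n)))"

definition theta :: "nat \<Rightarrow> nat \<Rightarrow> nat \<Rightarrow> (nat \<Rightarrow> bit) \<Rightarrow> (nat \<Rightarrow> bit)" where
  "theta n m k x = (\<lambda>j. x ((j + m * k) mod n) *
      (\<Prod>l\<in>{l. 1 \<le> l \<and> l \<le> m * k - 1 \<and> \<not> m dvd l}. x ((j + l) mod n) + 1))"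

end

theory Submission
  imports Defs
begin

text \<open>The value of \<open>\<theta>\<^sub>m\<^sub>,\<^sub>i\<^sub>+\<^sub>1\<close> at position \<open>p\<close> is the value of \<open>\<theta>\<^sub>m\<^sub>,\<^sub>i\<close> at \<open>p + m\<close>
  times the indicator that \<open>x\<close> vanishes at \<open>p + 1, \<dots>, p + m - 1\<close>. Wherever \<open>\<theta>\<^sub>m\<^sub>,\<^sub>i\<close>
  fires at \<open>p + m\<close>, no \<open>\<theta>\<^sub>m\<^sub>,\<^sub>l\<close> with \<open>l \<ge> 1\<close> can fire at \<open>p + u\<close> for \<open>0 < u < m\<close>:
  the 1 required by one of the two patterns would fall into the window of zeros required
  by the other. So at these positions \<open>g\<close> agrees with the identity, the factors
  \<open>S\<^sup>t\<^sup>-\<^sup>v \<circ> g + 1\<close> produce exactly that indicator, and linearity in the \<open>a\<^sub>i\<close> finishes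
  the proof. All positions involved are offsets from one base point taken before reduction
  mod \<open>n\<close>.\<close>

definition theta_zero_offsets :: "nat \<Rightarrow> nat \<Rightarrow> nat set" where
  "theta_zero_offsets m k = {l. 1 \<le> l \<and> l \<le> m * k - 1 \<and> \<not> m dvd l}"

lemma finite_theta_zero_offsets [simp]: "finite (theta_zero_offsets m k)"
  unfolding theta_zero_offsets_def by (rule finite_subset[of _ "{..m * k}"]) auto

lemma theta_eq:
  "theta n m k x j = x ((j + m * k) mod n) * (\<Prod>l\<in>theta_zero_offsets m k. x ((j + l) mod n) + 1)"
  unfolding theta_def theta_zero_offsets_def by simp

lemma theta_0 [simp]: "theta n m 0 x j = x (j mod n)"
  by (simp add: theta_eq theta_zero_offsets_def)

lemma theta_mod [simp]: "theta n m k x (j mod n) = theta n m k x j"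
  by (simp add: theta_def mod_add_left_eq)

lemma theta_eq_1_iff:
  "theta n m k x j = 1 \<longleftrightarrow>
     x ((j + m * k) mod n) = 1 \<and> (\<forall>l\<in>theta_zero_offsets m k. x ((j + l) mod n) = 0)"
proof -
  have "y + 1 \<noteq> 0 \<longleftrightarrow> y = 0" for y :: bit
    by (cases y) simp_all
  then show ?thesis
    by (simp flip: bit_not_zero_iff add: theta_eq prod_zero_iff del: bit_not_zero_iff)
qed

lemma not_dvd_add_mult:
  fixes m u c :: nat
  assumes "0 < u" "u < m"
  shows "\<not> m dvd u + m * c"
  using assms by (simp add: dvd_add_left_iff nat_dvd_not_less)

lemma theta_excludes_nearby:
  assumes i_match: "theta n m i x (p + m) = 1" and u: "0 < u" "u < m" and "0 < l"
  shows "theta n m l x (p + u) = 0"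
proof (rule ccontr)
  assume "theta n m l x (p + u) \<noteq> 0"
  then have l_match: "theta n m l x (p + u) = 1" by simp
  note i_pattern = i_match[unfolded theta_eq_1_iff]
    and l_pattern = l_match[unfolded theta_eq_1_iff]
  show False
  proof (cases "l \<le> i")
    case True
    obtain l' where l': "l = Suc l'" using \<open>0 < l\<close> by (cases l) auto
    define d where "d = u + m * l'"
    have "m * l \<le> m * i" using True by simp
    then have "d \<in> theta_zero_offsets m i"
      using u not_dvd_add_mult[OF u] by (auto simp: theta_zero_offsets_def d_def l')
    moreover have "p + m + d = p + u + m * l"
      by (simp add: d_def l')
    ultimately show False using i_pattern l_pattern by (metis add.assoc zero_neq_one)
  next
    case False
    define d where "d = (m - u) + m * i"
    have "m * Suc i \<le> m * l" using False by (intro mult_le_mono2) simp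
    then have "d \<in> theta_zero_offsets m l"
      using u not_dvd_add_mult[of "m - u" m i]
      by (auto simp: theta_zero_offsets_def d_def)
    moreover have "p + u + d = p + m + m * i"
      using u by (simp add: d_def)
    ultimately show False using i_pattern l_pattern by (metis add.assoc zero_neq_one)
  qed
qed

lemma theta_zero_offsets_Suc:
  "theta_zero_offsets m (Suc i) = {1..m - 1} \<union> (\<lambda>l. l + m) ` theta_zero_offsets m i"
proof (intro set_eqI iffI)
  fix l assume "l \<in> theta_zero_offsets m (Suc i)"
  then have l: "1 \<le> l" "l \<le> m * i + m - 1" "\<not> m dvd l"
    by (auto simp: theta_zero_offsets_def algebra_simps)
  show "l \<in> {1..m - 1} \<union> (\<lambda>l. l + m) ` theta_zero_offsets m i"
  proof (cases "l < m")
    case False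
    then have l_eq: "l = (l - m) + m" by simp
    with l(3) have "\<not> m dvd l - m" by (metis dvd_add_triv_right_iff)
    moreover have "m < l" using False l(3) by (metis dvd_refl nat_neq_iff)
    ultimately have "l - m \<in> theta_zero_offsets m i"
      using l by (auto simp: theta_zero_offsets_def)
    with l_eq
    show ?thesis by blast
  qed (use l in auto)
next
  fix l assume "l \<in> {1..m - 1} \<union> (\<lambda>l. l + m) ` theta_zero_offsets m i"
  then show "l \<in> theta_zero_offsets m (Suc i)"
    by (auto simp: theta_zero_offsets_def nat_dvd_not_less trans_le_add2)
qed

lemma theta_Suc:
  "theta n m (Suc i) x p = theta n m i x (p + m) * (\<Prod>u\<in>{1..m - 1}. x ((p + u) mod n) + 1)"
proof -
  have "(\<Prod>l\<in>theta_zero_offsets m (Suc i). x ((p + l) mod n) + 1)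
      = (\<Prod>u\<in>{1..m - 1}. x ((p + u) mod n) + 1) *
        (\<Prod>l\<in>(\<lambda>l. l + m) ` theta_zero_offsets m i. x ((p + l) mod n) + 1)"
    unfolding theta_zero_offsets_Suc by (rule prod.union_disjoint) auto
  also have "(\<Prod>l\<in>(\<lambda>l. l + m) ` theta_zero_offsets m i. x ((p + l) mod n) + 1)
      = (\<Prod>l\<in>theta_zero_offsets m i. x ((p + m + l) mod n) + 1)"
    by (subst prod.reindex) (auto simp: algebra_simps)
  finally show ?thesis by (simp add: theta_eq algebra_simps)
qed

lemma theta_Suc_perturbed:
  assumes "0 \<notin> L"
  shows "theta n m i x (p + m) *
      (\<Prod>u\<in>{1..m - 1}. theta n m 0 x (p + u) + (\<Sum>l\<in>L. b l * theta n m l x (p + u)) + 1)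
    = theta n m (Suc i) x p"
proof (cases "theta n m i x (p + m) = 1")
  case True
  have "theta n m l x (p + u) = 0" if "u \<in> {1..m - 1}" "l \<in> L" for u l
    using theta_excludes_nearby[OF True] that assms by (cases l) auto
  then show ?thesis by (simp add: theta_Suc True)
qed (simp add: theta_Suc)

lemma nat_mod_add_nat:
  assumes "0 < n"
  shows "nat ((z + int c) mod int n) = (nat (z mod int n) + c) mod n"
proof -
  have "int (nat ((z + int c) mod int n)) = (z mod int n + int c) mod int n"
    using assms by (simp add: mod_add_left_eq)
  also have "\<dots> = int ((nat (z mod int n) + c) mod n)"
    using assms by (simp add: of_nat_mod)
  finally show ?thesis by (rule of_nat_eq_iff[THEN iffD1])
qed

lemma shiftv_periodic:
  assumes "0 < n" and "v \<le> m" and periodic: "\<And>J. h (J mod n) = h J"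
  shows "shiftv n (t - int v) h j = h (nat ((int j + (t - int m)) mod int n) + (m - v))"
proof -
  have "int j + (t - int v) = (int j + (t - int m)) + int (m - v)"
    using assms(2) by (simp add: of_nat_diff)
  then show ?thesis by (simp only: shiftv_def nat_mod_add_nat[OF assms(1)] periodic)
qed

theorem lemma3:
  fixes n m k s :: nat and t :: int and a b :: "nat \<Rightarrow> bit"
    and f g :: "(nat \<Rightarrow> bit) \<Rightarrow> (nat \<Rightarrow> bit)"
  assumes "n \<ge> 1" and "m \<ge> 2" and "\<not> m dvd n" and "int m dvd t"
    and "f = (\<lambda>x j. \<Sum>i\<le>k. a i * theta n m i x j)"
    and "g = (\<lambda>x j. theta n m 0 x j + (\<Sum>l\<in>{1..s}. b l * theta n m l x j))"
  shows "\<forall>x. \<forall>j<n.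
    shiftv n t (f x) j * (\<Prod>v\<in>{1..m-1}. shiftv n (t - int v) (g x) j + 1)
      = shiftv n (t - int m) (\<lambda>j'. \<Sum>i\<le>k. a i * theta n m (i + 1) x j') j"
proof (intro allI impI)
  fix x j
  define p where "p = nat ((int j + (t - int m)) mod int n)"
  have n: "0 < n" using assms(1) by simp
  have f_periodic: "f x (J mod n) = f x J" for J by (simp add: assms(5))
  have g_periodic: "g x (J mod n) = g x J" for J by (simp add: assms(6))
  have f_shift: "shiftv n t (f x) j = f x (p + m)"
    using shiftv_periodic[where h = "f x" and v = 0, OF n _ f_periodic] by (simp add: p_def)
  have g_shift: "shiftv n (t - int v) (g x) j = g x (p + (m - v))" if "v \<in> {1..m - 1}" for v
    using that shiftv_periodic[where h = "g x" and m = m and t = t and j = j, OF n _ g_periodic]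
    by (auto simp: p_def)
  have "shiftv n t (f x) j * (\<Prod>v\<in>{1..m-1}. shiftv n (t - int v) (g x) j + 1)
      = f x (p + m) * (\<Prod>v\<in>{1..m - 1}. g x (p + (m - v)) + 1)"
    by (simp only: f_shift g_shift cong: prod.cong)
  also have "\<dots> = f x (p + m) * (\<Prod>u\<in>{1..m - 1}. g x (p + u) + 1)"
    using prod.atLeastAtMost_rev[of "\<lambda>u. g x (p + u) + 1" 1 "m - 1"] assms(2) by simp
  also have "\<dots> = (\<Sum>i\<le>k. a i * (theta n m i x (p + m) * (\<Prod>u\<in>{1..m - 1}. g x (p + u) + 1)))"
    by (simp only: assms(5) sum_distrib_right mult.assoc)
  also have "\<dots> = (\<Sum>i\<le>k. a i * theta n m (Suc i) x p)"
    unfolding assms(6)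
    by (simp only: theta_Suc_perturbed[of "{1..s}"] atLeastAtMost_iff not_one_le_zero simp_thms)
  also have "\<dots> = shiftv n (t - int m) (\<lambda>j'. \<Sum>i\<le>k. a i * theta n m (i + 1) x j') j"
    by (simp add: shiftv_def p_def)
  finally show "shiftv n t (f x) j * (\<Prod>v\<in>{1..m-1}. shiftv n (t - int v) (g x) j + 1)
      = shiftv n (t - int m) (\<lambda>j'. \<Sum>i\<le>k. a i * theta n m (i + 1) x j') j" .
qed

end
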